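(* Let $0<\alpha<10^{-5}$ and let $G$ be a graph with $n$ vertices and $m$ edges, where $m\ge\left(\frac14-\alpha\right)n^2$. Then either \[ bk(G)>\left(\frac16-2\alpha^{1/3}\right)n, \] or $G$ contains an induced bipartite subgraph $G_1$ with at least $\left(1-\alpha^{1/3}\right)n$ vertices and minimum degree \[ \delta(G_1)\ge\left(\frac12-4\alpha^{1/3}\right)n. \]
   Context: A book of size $q$ is a set of $q$ triangles sharing a common edge; the booksize $bk(G)$ is the size of the largest book in $G$, i.e. the maximum over edges $uv$ of the number of common neighbours of $u$ and $v$. $\delta(H)$ is the minimum degree of a graph $H$. *)

theory Defs
  imports Complex_Main
begin

definition simple_graph :: "'a set \<Rightarrow> ('a \<Rightarrow> 'a \<Rightarrow> bool) \<Rightarrow> bool" where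
  "simple_graph V E \<longleftrightarrow> finite V \<and> (\<forall>u v. E u v \<longrightarrow> u \<in> V \<and> v \<in> V) \<and>
     (\<forall>u v. E u v \<longrightarrow> E v u) \<and> (\<forall>v. \<not> E v v)"

definition edges :: "'a set \<Rightarrow> ('a \<Rightarrow> 'a \<Rightarrow> bool) \<Rightarrow> 'a set set" where
  "edges V E = {{u, v} | u v. u \<in> V \<and> v \<in> V \<and> E u v}"

definition common_nbrs :: "'a set \<Rightarrow> ('a \<Rightarrow> 'a \<Rightarrow> bool) \<Rightarrow> 'a \<Rightarrow> 'a \<Rightarrow> nat" where
  "common_nbrs V E u v = card {w \<in> V. E u w \<and> E v w}"

definition booksize :: "'a set \<Rightarrow> ('a \<Rightarrow> 'a \<Rightarrow> bool) \<Rightarrow> nat" where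
  "booksize V E = Max (insert 0 {common_nbrs V E u v | u v. u \<in> V \<and> v \<in> V \<and> E u v})"

definition induced_bipartite :: "'a set \<Rightarrow> ('a \<Rightarrow> 'a \<Rightarrow> bool) \<Rightarrow> bool" where
  "induced_bipartite S E \<longleftrightarrow> (\<exists>A B. A \<union> B = S \<and> A \<inter> B = {} \<and>
     (\<forall>u\<in>A. \<forall>v\<in>A. \<not> E u v) \<and> (\<forall>u\<in>B. \<forall>v\<in>B. \<not> E u v))"

definition deg_in :: "'a set \<Rightarrow> ('a \<Rightarrow> 'a \<Rightarrow> bool) \<Rightarrow> 'a \<Rightarrow> nat" where
  "deg_in S E v = card {u \<in> S. E v u}"

end

theory Submission
  imports Defs
begin

text \<open>If every edge lies in at most \<open>n/6\<close> triangles, double counting triangles against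
  the inequalities \<open>d(u) + d(v) \<le> n + c(u,v)\<close> on edges and
  \<open>d(u) + d(v) + d(w) \<le> n + c(u,v) + c(v,w) + c(w,u)\<close> on triangles (\<open>c\<close> the codegree)
  gives \<open>\<Sum> d(u)\<^sup>2 \<le> n m\<close>.  Together with \<open>m \<ge> (1/4 - \<alpha>) n\<^sup>2\<close> this bounds the variance of the
  degrees by \<open>\<alpha> n\<^sup>3\<close>, so by Chebyshev all but \<open>\<beta> n\<close> vertices, \<open>\<beta> = \<alpha> powr (1/3)\<close>, have degree
  at least \<open>(1/2 - 3/2 \<beta>) n\<close>.  Three mutually adjacent such vertices would force a codegree
  above \<open>(1/6 - 2 \<beta>) n\<close>, so they induce a triangle-free graph whose minimum degree exceeds
  \<open>2/5\<close> of its order; as in the Andrasfai-Erdos-Sos theorem such a graph is bipartite.\<close>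

section \<open>Few values far below the mean\<close>

lemma sum_sq_dev_mean:
  fixes f :: "'b \<Rightarrow> real"
  assumes "finite A" "A \<noteq> {}"
  shows "(\<Sum>x\<in>A. (f x - (\<Sum>y\<in>A. f y) / card A) ^ 2)
    = (\<Sum>x\<in>A. f x ^ 2) - (\<Sum>x\<in>A. f x) ^ 2 / card A"
proof -
  define \<mu> where "\<mu> = (\<Sum>y\<in>A. f y) / card A"
  have "card A > 0" using assms by (simp add: card_gt_0_iff)
  have "(\<Sum>x\<in>A. 2 * f x * \<mu>) = 2 * \<mu> * (\<Sum>x\<in>A. f x)"
    by (simp add: sum_distrib_left sum_distrib_right mult_ac)
  then have "(\<Sum>x\<in>A. (f x - \<mu>) ^ 2) = (\<Sum>x\<in>A. f x ^ 2) - 2 * \<mu> * (\<Sum>x\<in>A. f x) + card A * \<mu> ^ 2"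
    by (simp add: power2_diff sum.distrib sum_subtractf)
  also have "\<dots> = (\<Sum>x\<in>A. f x ^ 2) - (\<Sum>x\<in>A. f x) ^ 2 / card A"
    using \<open>card A > 0\<close> by (simp add: \<mu>_def power2_eq_square field_simps)
  finally show ?thesis by (simp add: \<mu>_def)
qed

lemma card_far_below_le_sum_sq_dev:
  fixes f :: "'b \<Rightarrow> real" and \<mu> t :: real
  assumes "finite A" "0 \<le> t"
  shows "card {x \<in> A. f x \<le> \<mu> - t} * t ^ 2 \<le> (\<Sum>x\<in>A. (f x - \<mu>) ^ 2)"
proof -
  have "card {x \<in> A. f x \<le> \<mu> - t} * t ^ 2 = (\<Sum>x \<in> {x \<in> A. f x \<le> \<mu> - t}. t ^ 2)"
    by simp
  also have "\<dots> \<le> (\<Sum>x \<in> {x \<in> A. f x \<le> \<mu> - t}. (f x - \<mu>) ^ 2)"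
    using assms(2) by (intro sum_mono) (simp add: power2_commute[of "f _"] power_mono)
  also have "\<dots> \<le> (\<Sum>x\<in>A. (f x - \<mu>) ^ 2)"
    using assms(1) by (intro sum_mono2) auto
  finally show ?thesis .
qed

lemma sum_sq_dev_mean_le:
  fixes f :: "'b \<Rightarrow> real" and \<epsilon> :: real
  assumes "finite A" "A \<noteq> {}" "0 \<le> \<epsilon>"
    and sq: "(\<Sum>x\<in>A. f x ^ 2) \<le> card A * (\<Sum>x\<in>A. f x) / 2"
    and sum: "(1/2 - \<epsilon>) * real (card A) ^ 2 \<le> (\<Sum>x\<in>A. f x)"
  shows "(\<Sum>x\<in>A. (f x - (\<Sum>y\<in>A. f y) / card A) ^ 2) \<le> \<epsilon> * real (card A) ^ 3 / 2"
proof -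
  define n where "n = real (card A)"
  define s where "s = (\<Sum>x\<in>A. f x)"
  have "n > 0" using assms by (simp add: n_def card_gt_0_iff)
  have var: "(\<Sum>x\<in>A. (f x - s / n) ^ 2) = (\<Sum>x\<in>A. f x ^ 2) - s ^ 2 / n"
    unfolding n_def s_def by (rule sum_sq_dev_mean[OF assms(1,2)])
  have "s / n * (n ^ 2 / 2 - s) = n * s / 2 - s ^ 2 / n"
    using \<open>n > 0\<close> by (simp add: power2_eq_square field_simps)
  then have "(\<Sum>x\<in>A. (f x - s / n) ^ 2) \<le> s / n * (n ^ 2 / 2 - s)"
    using var sq unfolding n_def s_def by linarith
  also have "\<dots> \<le> n / 2 * (\<epsilon> * n ^ 2)"
  proof (cases "s \<le> 0")
    case True
    moreover have "0 \<le> n ^ 2 / 2 - s"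
      using True zero_le_power2[of n] by linarith
    ultimately have "s / n * (n ^ 2 / 2 - s) \<le> 0"
      using \<open>n > 0\<close> by (intro mult_nonpos_nonneg) (simp_all add: divide_nonpos_pos)
    also have "0 \<le> n / 2 * (\<epsilon> * n ^ 2)"
      using \<open>n > 0\<close> \<open>0 \<le> \<epsilon>\<close> by simp
    finally show ?thesis .
  next
    case False
    have "0 \<le> (\<Sum>x\<in>A. (f x - s / n) ^ 2)"
      by (simp add: sum_nonneg)
    then have "s ^ 2 / n \<le> n * s / 2"
      using var sq unfolding n_def s_def by linarith
    then have "s * s \<le> s * (n ^ 2 / 2)"
      using \<open>n > 0\<close> by (simp add: power2_eq_square field_simps)
    then have "s / n \<le> n / 2"
      using False \<open>n > 0\<close> by (simp add: power2_eq_square field_simps)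
    moreover have "n ^ 2 / 2 - s \<le> \<epsilon> * n ^ 2"
      using sum unfolding n_def s_def by (simp add: algebra_simps)
    moreover have "0 \<le> n ^ 2 / 2 - s"
      using \<open>s * s \<le> s * (n ^ 2 / 2)\<close> False by simp
    ultimately show ?thesis
      using \<open>n > 0\<close> by (intro mult_mono) auto
  qed
  also have "\<dots> = \<epsilon> * real (card A) ^ 3 / 2"
    by (simp add: n_def power2_eq_square power3_eq_cube)
  finally show ?thesis
    unfolding n_def s_def .
qed

lemma card_low_values_le:
  fixes f :: "'b \<Rightarrow> real" and \<beta> :: real
  assumes "finite A" "0 < \<beta>" "\<beta> \<le> 1/2"
    and sq: "(\<Sum>x\<in>A. f x ^ 2) \<le> card A * (\<Sum>x\<in>A. f x) / 2"
    and sum: "(1/2 - 2 * \<beta> ^ 3) * real (card A) ^ 2 \<le> (\<Sum>x\<in>A. f x)"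
  shows "card {x \<in> A. f x < (1/2 - 3/2 * \<beta>) * card A} \<le> \<beta> * card A"
proof (cases "A = {}")
  case True
  then show ?thesis by simp
next
  case False
  define n where "n = real (card A)"
  define \<mu> where "\<mu> = (\<Sum>x\<in>A. f x) / n"
  have "n > 0" using False \<open>finite A\<close> by (simp add: n_def card_gt_0_iff)
  have "\<beta> * \<beta> \<le> 1/2 * (1/2)"
    using assms(2,3) by (intro mult_mono) auto
  then have "2 * \<beta> ^ 3 \<le> \<beta> / 2"
    using assms(2) by (simp add: power3_eq_cube)
  then have "(1/2 - \<beta> / 2) * n \<le> (1/2 - 2 * \<beta> ^ 3) * n"
    using \<open>n > 0\<close> by (intro mult_right_mono) auto
  also have "\<dots> \<le> \<mu>"
    using sum \<open>n > 0\<close> by (simp add: \<mu>_def n_def power2_eq_square field_simps)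
  finally have "{x \<in> A. f x < (1/2 - 3/2 * \<beta>) * n} \<subseteq> {x \<in> A. f x \<le> \<mu> - \<beta> * n}"
    by (auto simp: algebra_simps)
  then have "card {x \<in> A. f x < (1/2 - 3/2 * \<beta>) * n} * (\<beta> * n) ^ 2
      \<le> card {x \<in> A. f x \<le> \<mu> - \<beta> * n} * (\<beta> * n) ^ 2"
    using \<open>finite A\<close> by (intro mult_right_mono) (auto intro: card_mono)
  also have "\<dots> \<le> (\<Sum>x\<in>A. (f x - \<mu>) ^ 2)"
    using \<open>finite A\<close> \<open>n > 0\<close> assms(2) by (intro card_far_below_le_sum_sq_dev) auto
  also have "\<dots> \<le> 2 * \<beta> ^ 3 * n ^ 3 / 2"
    unfolding \<mu>_def n_def using assms False by (intro sum_sq_dev_mean_le) auto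
  also have "\<dots> = (\<beta> * n) * (\<beta> * n) ^ 2"
    by (simp add: power2_eq_square power3_eq_cube)
  finally show ?thesis
    using \<open>n > 0\<close> assms(2) by (simp add: n_def)
qed

section \<open>Dense triangle-free graphs are bipartite\<close>

lemma card_disjoint_subsets_le:
  assumes "finite T" "P \<subseteq> T" "Q \<subseteq> T" "P \<inter> Q = {}"
  shows "card P + card Q \<le> card T"
  by (metis assms card_Un_disjoint card_mono finite_subset le_sup_iff)

locale dense_triangle_free =
  fixes S :: "'a set" and E :: "'a \<Rightarrow> 'a \<Rightarrow> bool" and \<delta> :: real
  assumes finite_S: "finite S"
    and triangle_free: "\<lbrakk>u \<in> S; v \<in> S; w \<in> S; E u v; E v w\<rbrakk> \<Longrightarrow> \<not> E u w"
    and min_degree: "v \<in> S \<Longrightarrow> \<delta> \<le> real (deg_in S E v)"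
    and dense: "2 * real (card S) < 5 * \<delta>"
begin

abbreviation N :: "'a \<Rightarrow> 'a set" where "N v \<equiv> {u \<in> S. E v u}"

lemma min_degree_N: "v \<in> S \<Longrightarrow> \<delta> \<le> real (card (N v))"
  using min_degree by (simp add: deg_in_def)

lemma N_disjoint_if_adjacent: "\<lbrakk>p \<in> S; q \<in> S; E p q\<rbrakk> \<Longrightarrow> N p \<inter> N q = {}"
  using triangle_free by blast

lemma nonadjacent_if_N_avoids:
  assumes "T \<subseteq> S" "\<delta> \<le> real (card T)" "u \<in> S" "v \<in> S"
    and "N u \<inter> T = {}" "N v \<inter> T = {}"
  shows "\<not> E u v"
proof
  assume "E u v"
  then have "card (N u) + card (N v) \<le> card (S - T)"
    using assms N_disjoint_if_adjacent by (intro card_disjoint_subsets_le) (auto simp: finite_S)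
  moreover have "card (S - T) = card S - card T"
    using assms(1) finite_S by (simp add: card_Diff_subset finite_subset)
  moreover have "card T \<le> card S" using assms(1) finite_S by (simp add: card_mono)
  ultimately show False
    using assms min_degree_N[of u] min_degree_N[of v] dense by linarith
qed

lemma N_misses_one_side:
  assumes "x \<in> S" "y \<in> S" "E x y" "v \<in> S"
  shows "N v \<inter> N y = {} \<or> N v \<inter> N x = {}"
proof (rule ccontr)
  assume "\<not> ?thesis"
  then obtain a b where a: "a \<in> N v" "a \<in> N y" and b: "b \<in> N v" "b \<in> N x"
    by blast
  have "a \<in> S" "b \<in> S" using a b by auto
  \<comment> \<open>Since \<open>N y\<close> and \<open>N x\<close> are disjoint, the five neighbourhoods of \<open>v, a, b, x, y\<close>
    fit twice into \<open>S\<close>, i.e. \<open>5 * \<delta> \<le> 2 * card S\<close>.\<close>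
  have "card (N v - N y) + card (N a) \<le> card (S - N y)"
    using N_disjoint_if_adjacent[OF \<open>y \<in> S\<close> \<open>a \<in> S\<close>] N_disjoint_if_adjacent[OF \<open>v \<in> S\<close> \<open>a \<in> S\<close>] a
    by (intro card_disjoint_subsets_le) (auto simp: finite_S)
  moreover have "card (N v \<inter> N y) + card (N b) \<le> card (S - N x)"
    using N_disjoint_if_adjacent[OF \<open>x \<in> S\<close> \<open>b \<in> S\<close>] N_disjoint_if_adjacent[OF \<open>v \<in> S\<close> \<open>b \<in> S\<close>]
      N_disjoint_if_adjacent[OF assms(1-3)] b
    by (intro card_disjoint_subsets_le) (auto simp: finite_S)
  moreover have "card (N v) = card (N v - N y) + card (N v \<inter> N y)"
    using card_Int_Diff[of "N v" "N y"] finite_S by simp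
  moreover have S_split: "card S = card (N z) + card (S - N z)" for z
    using card_Int_Diff[of S "N z"] finite_S by (simp add: Int_absorb1)
  ultimately have "card (N v) + card (N a) + card (N b) + card (N x) + card (N y) \<le> 2 * card S"
    using S_split[of x] S_split[of y] by linarith
  then show False
    using min_degree_N[of v] min_degree_N[of a] min_degree_N[of b] min_degree_N[of x]
      min_degree_N[of y] \<open>a \<in> S\<close> \<open>b \<in> S\<close> assms dense by linarith
qed

lemma induced_bipartite: "induced_bipartite S E"
proof (cases "S = {}")
  case True
  then show ?thesis by (auto simp: induced_bipartite_def)
next
  case False
  then obtain x where x: "x \<in> S" by blast
  have "0 < real (card (N x))"
    using min_degree_N[OF x] dense by linarith
  then have "N x \<noteq> {}"
    by (auto simp del: Collect_empty_eq)
  then obtain y where y: "y \<in> N x"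
    by blast
  define A where "A = {v \<in> S. N v \<inter> N y = {}}"
  have "\<not> E u v" if "u \<in> A" "v \<in> A" for u v
    using that y min_degree_N[of y] by (intro nonadjacent_if_N_avoids[of "N y"]) (auto simp: A_def)
  moreover have "\<not> E u v" if "u \<in> S - A" "v \<in> S - A" for u v
    using that x y min_degree_N[of x] N_misses_one_side[OF x _ _, of y]
    by (intro nonadjacent_if_N_avoids[of "N x"]) (auto simp: A_def)
  moreover have "A \<subseteq> S" by (simp add: A_def)
  ultimately show ?thesis
    unfolding induced_bipartite_def by (intro exI[of _ A] exI[of _ "S - A"]) blast
qed

end

section \<open>Degrees and codegrees\<close>

lemma card_three_le_Un_Int:
  assumes "finite A" "finite B" "finite C"
  shows "card A + card B + card C
    \<le> card (A \<union> B \<union> C) + card (A \<inter> B) + card (B \<inter> C) + card (C \<inter> A)"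
proof -
  have "card A + card B = card (A \<union> B) + card (A \<inter> B)"
    using assms by (intro card_Un_Int) auto
  moreover have "card (A \<union> B) + card C = card (A \<union> B \<union> C) + card ((A \<union> B) \<inter> C)"
    using assms by (intro card_Un_Int) auto
  moreover have "card ((A \<union> B) \<inter> C) \<le> card (B \<inter> C) + card (C \<inter> A)"
  proof -
    have "(A \<union> B) \<inter> C = (B \<inter> C) \<union> (C \<inter> A)" by blast
    then show ?thesis by (simp only: card_Un_le)
  qed
  ultimately show ?thesis by linarith
qed

lemma deg_in_le_deg_in_Diff:
  assumes "finite S" "finite L"
  shows "deg_in S E v \<le> deg_in (S - L) E v + card L"
proof -
  have "deg_in S E v \<le> card ({u \<in> S - L. E v u} \<union> L)"
    unfolding deg_in_def using assms by (intro card_mono) auto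
  also have "\<dots> \<le> deg_in (S - L) E v + card L"
    unfolding deg_in_def by (rule card_Un_le)
  finally show ?thesis .
qed

locale graph =
  fixes V :: "'a set" and E :: "'a \<Rightarrow> 'a \<Rightarrow> bool"
  assumes simple: "simple_graph V E"
begin

lemma finite_V: "finite V"
  and adj_in_V: "E u v \<Longrightarrow> u \<in> V" "E u v \<Longrightarrow> v \<in> V"
  and adj_sym: "E u v \<Longrightarrow> E v u"
  and adj_irrefl: "\<not> E v v"
  using simple by (auto simp: simple_graph_def)

lemma adj_commute: "E u v \<longleftrightarrow> E v u"
  using adj_sym by blast

definition degree :: "'a \<Rightarrow> real" where
  "degree u = real (deg_in V E u)"

definition codegree :: "'a \<Rightarrow> 'a \<Rightarrow> real" where
  "codegree u v = real (common_nbrs V E u v)"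

definition arc_sum :: "('a \<Rightarrow> 'a \<Rightarrow> real) \<Rightarrow> real" where
  "arc_sum f = (\<Sum>u\<in>V. \<Sum>v\<in>V. of_bool (E u v) * f u v)"

definition triangle_sum :: "('a \<Rightarrow> 'a \<Rightarrow> 'a \<Rightarrow> real) \<Rightarrow> real" where
  "triangle_sum F = (\<Sum>u\<in>V. \<Sum>v\<in>V. \<Sum>w\<in>V. of_bool (E u v \<and> E v w \<and> E w u) * F u v w)"

lemma degree_eq_sum: "degree u = (\<Sum>v\<in>V. of_bool (E u v))"
  by (simp add: degree_def deg_in_def finite_V Int_def conj_commute)

lemma codegree_eq_sum: "codegree u v = (\<Sum>w\<in>V. of_bool (E u w \<and> E v w))"
  by (simp add: codegree_def common_nbrs_def finite_V Int_def conj_commute)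

lemma codegree_nonneg: "0 \<le> codegree u v"
  by (simp add: codegree_def)

lemma codegree_sym: "codegree u v = codegree v u"
  by (simp add: codegree_def common_nbrs_def conj_commute)

lemma degree_add_le_codegree: "degree u + degree v \<le> card V + codegree u v"
proof -
  let ?N = "\<lambda>x. {y \<in> V. E x y}"
  have "?N u \<inter> ?N v = {w \<in> V. E u w \<and> E v w}" by auto
  then have "card (?N u) + card (?N v) = card (?N u \<union> ?N v) + card {w \<in> V. E u w \<and> E v w}"
    using finite_V card_Un_Int[of "?N u" "?N v"] by simp
  moreover have "card (?N u \<union> ?N v) \<le> card V"
    using finite_V by (intro card_mono) auto
  ultimately have "card (?N u) + card (?N v) \<le> card V + card {w \<in> V. E u w \<and> E v w}"
    by linarith
  then show ?thesis
    unfolding degree_def codegree_def deg_in_def common_nbrs_def of_nat_add[symmetric] of_nat_le_iff .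
qed

lemma degree_add3_le_codegrees:
  "degree u + degree v + degree w \<le> card V + codegree u v + codegree v w + codegree w u"
proof -
  let ?N = "\<lambda>x. {y \<in> V. E x y}"
  have inter: "?N x \<inter> ?N y = {z \<in> V. E x z \<and> E y z}" for x y by auto
  have "card (?N u) + card (?N v) + card (?N w)
    \<le> card (?N u \<union> ?N v \<union> ?N w) + card (?N u \<inter> ?N v) + card (?N v \<inter> ?N w) + card (?N w \<inter> ?N u)"
    using finite_V by (intro card_three_le_Un_Int) auto
  moreover have "card (?N u \<union> ?N v \<union> ?N w) \<le> card V"
    using finite_V by (intro card_mono) auto
  ultimately have "card (?N u) + card (?N v) + card (?N w) \<le> card V
      + card {z \<in> V. E u z \<and> E v z} + card {z \<in> V. E v z \<and> E w z} + card {z \<in> V. E w z \<and> E u z}"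
    unfolding inter by linarith
  then show ?thesis
    unfolding degree_def codegree_def deg_in_def common_nbrs_def of_nat_add[symmetric] of_nat_le_iff .
qed

lemma arc_sum_add: "arc_sum (\<lambda>u v. f u v + g u v) = arc_sum f + arc_sum g"
  by (simp add: arc_sum_def distrib_left sum.distrib)

lemma arc_sum_diff: "arc_sum (\<lambda>u v. f u v - g u v) = arc_sum f - arc_sum g"
  by (simp add: arc_sum_def right_diff_distrib sum_subtractf)

lemma arc_sum_cmult: "arc_sum (\<lambda>u v. c * f u v) = c * arc_sum f"
  by (simp add: arc_sum_def sum_distrib_left mult.left_commute)

lemma arc_sum_mono: "(\<And>u v. E u v \<Longrightarrow> f u v \<le> g u v) \<Longrightarrow> arc_sum f \<le> arc_sum g"
  unfolding arc_sum_def by (intro sum_mono) auto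

lemma arc_sum_swap: "arc_sum f = arc_sum (\<lambda>u v. f v u)"
proof -
  have "arc_sum f = (\<Sum>v\<in>V. \<Sum>u\<in>V. of_bool (E u v) * f u v)"
    unfolding arc_sum_def by (rule sum.swap)
  also have "\<dots> = arc_sum (\<lambda>u v. f v u)"
    unfolding arc_sum_def by (simp add: adj_commute)
  finally show ?thesis .
qed

lemma arc_sum_vertex: "arc_sum (\<lambda>u v. g u) = (\<Sum>u\<in>V. g u * degree u)"
  by (simp add: arc_sum_def degree_eq_sum sum_distrib_left mult.commute)

lemma arc_sum_const: "arc_sum (\<lambda>u v. c) = c * (\<Sum>u\<in>V. degree u)"
  by (simp add: arc_sum_vertex sum_distrib_left)

lemma triangle_sum_add:
  "triangle_sum (\<lambda>u v w. F u v w + G u v w) = triangle_sum F + triangle_sum G"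
  by (simp add: triangle_sum_def distrib_left sum.distrib)

lemma triangle_sum_cmult: "triangle_sum (\<lambda>u v w. c * F u v w) = c * triangle_sum F"
  by (simp add: triangle_sum_def sum_distrib_left mult.left_commute)

lemma triangle_sum_mono:
  "(\<And>u v w. E u v \<Longrightarrow> E v w \<Longrightarrow> E w u \<Longrightarrow> F u v w \<le> G u v w)
    \<Longrightarrow> triangle_sum F \<le> triangle_sum G"
  unfolding triangle_sum_def by (intro sum_mono) auto

lemma triangle_sum_rotate: "triangle_sum F = triangle_sum (\<lambda>u v w. F v w u)"
proof -
  have "triangle_sum F = (\<Sum>u\<in>V. \<Sum>w\<in>V. \<Sum>v\<in>V. of_bool (E u v \<and> E v w \<and> E w u) * F u v w)"
    unfolding triangle_sum_def by (intro sum.cong refl sum.swap)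
  also have "\<dots> = (\<Sum>w\<in>V. \<Sum>u\<in>V. \<Sum>v\<in>V. of_bool (E u v \<and> E v w \<and> E w u) * F u v w)"
    by (rule sum.swap)
  also have "\<dots> = triangle_sum (\<lambda>u v w. F v w u)"
    unfolding triangle_sum_def by (simp only: conj_ac)
  finally show ?thesis .
qed

lemma triangle_sum_arc: "triangle_sum (\<lambda>u v w. f u v) = arc_sum (\<lambda>u v. f u v * codegree u v)"
proof -
  have "triangle_sum (\<lambda>u v w. f u v)
      = (\<Sum>u\<in>V. \<Sum>v\<in>V. \<Sum>w\<in>V. (of_bool (E u v) * f u v) * of_bool (E u w \<and> E v w))"
    unfolding triangle_sum_def by (intro sum.cong refl) (auto simp: adj_commute)
  also have "\<dots> = arc_sum (\<lambda>u v. f u v * codegree u v)"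
    by (simp only: arc_sum_def codegree_eq_sum sum_distrib_left mult.assoc)
  finally show ?thesis .
qed

lemma triangle_degree_sum_le:
  "3 * arc_sum (\<lambda>u v. degree u * codegree u v)
    \<le> card V * arc_sum codegree + 3 * arc_sum (\<lambda>u v. codegree u v ^ 2)"
proof -
  have "triangle_sum (\<lambda>u v w. degree u + degree v + degree w)
      \<le> triangle_sum (\<lambda>u v w. card V + codegree u v + codegree v w + codegree w u)"
    by (intro triangle_sum_mono degree_add3_le_codegrees)
  moreover have "triangle_sum (\<lambda>u v w. degree u + degree v + degree w)
      = 3 * triangle_sum (\<lambda>u v w. degree u)"
    using triangle_sum_rotate[of "\<lambda>u v w. degree u"] triangle_sum_rotate[of "\<lambda>u v w. degree v"]
    by (simp add: triangle_sum_add)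
  moreover have "triangle_sum (\<lambda>u v w. card V + codegree u v + codegree v w + codegree w u)
      = card V * triangle_sum (\<lambda>u v w. 1) + 3 * triangle_sum (\<lambda>u v w. codegree u v)"
    using triangle_sum_rotate[of "\<lambda>u v w. codegree u v"]
      triangle_sum_rotate[of "\<lambda>u v w. codegree v w"] triangle_sum_cmult[of "card V" "\<lambda>u v w. 1"]
    by (simp add: triangle_sum_add)
  ultimately show ?thesis
    by (simp add: triangle_sum_arc power2_eq_square)
qed

lemma edge_degree_sum_le:
  fixes K :: real
  assumes codegree_le: "\<And>u v. E u v \<Longrightarrow> codegree u v \<le> K"
  shows "2 * (K * (\<Sum>u\<in>V. degree u ^ 2) - arc_sum (\<lambda>u v. degree u * codegree u v))
    \<le> K * card V * (\<Sum>u\<in>V. degree u) + K * arc_sum codegree - card V * arc_sum codegree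
      - arc_sum (\<lambda>u v. codegree u v ^ 2)"
proof -
  have "arc_sum (\<lambda>u v. (K - codegree u v) * degree u)
      = arc_sum (\<lambda>u v. K * degree u - degree u * codegree u v)"
    by (simp add: algebra_simps)
  also have "\<dots> = K * (\<Sum>u\<in>V. degree u ^ 2) - arc_sum (\<lambda>u v. degree u * codegree u v)"
    by (simp add: arc_sum_diff arc_sum_cmult arc_sum_vertex power2_eq_square)
  finally have "arc_sum (\<lambda>u v. (K - codegree u v) * (degree u + degree v))
      = 2 * (K * (\<Sum>u\<in>V. degree u ^ 2) - arc_sum (\<lambda>u v. degree u * codegree u v))"
    using arc_sum_swap[of "\<lambda>u v. (K - codegree u v) * degree u"]
    by (simp add: distrib_left arc_sum_add codegree_sym)
  moreover have "arc_sum (\<lambda>u v. (K - codegree u v) * (card V + codegree u v))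
      = arc_sum (\<lambda>u v. K * card V + K * codegree u v - card V * codegree u v - codegree u v ^ 2)"
    by (simp add: algebra_simps power2_eq_square)
  moreover have "\<dots> = K * card V * (\<Sum>u\<in>V. degree u) + K * arc_sum codegree
      - card V * arc_sum codegree - arc_sum (\<lambda>u v. codegree u v ^ 2)"
    by (simp add: arc_sum_diff arc_sum_add arc_sum_cmult arc_sum_const)
  moreover have "arc_sum (\<lambda>u v. (K - codegree u v) * (degree u + degree v))
      \<le> arc_sum (\<lambda>u v. (K - codegree u v) * (card V + codegree u v))"
    using codegree_le degree_add_le_codegree by (intro arc_sum_mono mult_left_mono) auto
  ultimately show ?thesis
    by simp
qed

text \<open>\<open>K = n / 6\<close> is the weight for which the codegree terms of the edge and triangle
  inequalities cancel, up to \<open>c(u,v)\<^sup>2 \<le> K c(u,v)\<close>.\<close>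

lemma sum_degree_squares_le:
  assumes codegree_le: "\<And>u v. E u v \<Longrightarrow> codegree u v \<le> card V / 6"
  shows "(\<Sum>u\<in>V. degree u ^ 2) \<le> card V * (\<Sum>u\<in>V. degree u) / 2"
proof -
  define n where "n = real (card V)"
  define K where "K = n / 6"
  define X where "X = arc_sum (\<lambda>u v. degree u * codegree u v)"
  define Y where "Y = arc_sum codegree"
  define Z where "Z = arc_sum (\<lambda>u v. codegree u v ^ 2)"
  have "2 * (K * (\<Sum>u\<in>V. degree u ^ 2) - X) \<le> K * n * (\<Sum>u\<in>V. degree u) + K * Y - n * Y - Z"
    using edge_degree_sum_le[of K] codegree_le by (simp add: K_def n_def X_def Y_def Z_def)
  moreover have "Z \<le> K * Y"
  proof -
    have "codegree u v ^ 2 \<le> K * codegree u v" if "E u v" for u v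
      using mult_right_mono[OF codegree_le[OF that] codegree_nonneg[of u v]]
      by (simp add: power2_eq_square K_def n_def)
    then show ?thesis
      unfolding Z_def Y_def arc_sum_cmult[symmetric] by (rule arc_sum_mono)
  qed
  moreover have "3 * X \<le> n * Y + 3 * Z"
    using triangle_degree_sum_le by (simp add: X_def Y_def Z_def n_def)
  moreover have "n * Y = 6 * (K * Y)" by (simp add: K_def)
  ultimately have "2 * (K * (\<Sum>u\<in>V. degree u ^ 2)) \<le> K * n * (\<Sum>u\<in>V. degree u)"
    by (smt (verit))
  moreover have "0 < K \<or> V = {}"
    using finite_V by (auto simp: K_def n_def)
  ultimately show ?thesis
    by (auto simp: n_def)
qed

lemma card_edges_containing: "card {e \<in> edges V E. u \<in> e} = deg_in V E u"
proof -
  have "bij_betw (\<lambda>v. {u, v}) {v \<in> V. E u v} {e \<in> edges V E. u \<in> e}"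
  proof (rule bij_betw_imageI)
    show "inj_on (\<lambda>v. {u, v}) {v \<in> V. E u v}"
      using adj_irrefl by (auto intro!: inj_onI simp: doubleton_eq_iff)
    show "(\<lambda>v. {u, v}) ` {v \<in> V. E u v} = {e \<in> edges V E. u \<in> e}"
      using adj_in_V adj_sym by (auto simp: edges_def image_def doubleton_eq_iff)
  qed
  then show ?thesis
    by (simp add: deg_in_def bij_betw_same_card)
qed

lemma sum_degree_eq_two_card_edges: "(\<Sum>u\<in>V. degree u) = 2 * card (edges V E)"
proof -
  have "finite (edges V E)"
    by (rule finite_subset[of _ "Pow V"]) (auto simp: edges_def finite_V)
  moreover have "card {u \<in> V. u \<in> e} = 2" if e: "e \<in> edges V E" for e
  proof -
    obtain a b where "e = {a, b}" "a \<in> V" "b \<in> V" "E a b"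
      using e unfolding edges_def by blast
    then have "{u \<in> V. u \<in> e} = {a, b}" "a \<noteq> b"
      using adj_irrefl by auto
    then show ?thesis by simp
  qed
  ultimately have "(\<Sum>u\<in>V. card {e \<in> edges V E. u \<in> e}) = 2 * card (edges V E)"
    using finite_V by (intro sum_multicount) auto
  then show ?thesis
    by (simp add: degree_def card_edges_containing flip: of_nat_sum)
qed

lemma codegree_le_booksize:
  assumes "E u v"
  shows "codegree u v \<le> booksize V E"
proof -
  let ?B = "{common_nbrs V E u v | u v. u \<in> V \<and> v \<in> V \<and> E u v}"
  have "?B \<subseteq> (\<lambda>(u, v). common_nbrs V E u v) ` (V \<times> V)"
    by auto
  then have "finite ?B"
    using finite_V finite_subset by blast
  moreover have "common_nbrs V E u v \<in> ?B"
    using assms adj_in_V by blast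
  ultimately show ?thesis
    unfolding codegree_def booksize_def by simp
qed

lemma no_triangle_if_high_degree:
  fixes c d :: real
  assumes "\<And>u v. E u v \<Longrightarrow> codegree u v \<le> c"
    and "\<And>v. v \<in> S \<Longrightarrow> d \<le> degree v"
    and "card V + 3 * c < 3 * d"
    and "u \<in> S" "v \<in> S" "w \<in> S" "E u v" "E v w"
  shows "\<not> E u w"
proof
  assume "E u w"
  then show False
    using degree_add3_le_codegrees[of u v w] assms adj_sym[OF \<open>E u w\<close>]
    by (smt (verit))
qed

lemma card_low_degree_le:
  fixes \<beta> :: real
  assumes "0 < \<beta>" "\<beta> \<le> 1/2"
    and "\<And>u v. E u v \<Longrightarrow> codegree u v \<le> card V / 6"
    and edges_ge: "(1/4 - \<beta> ^ 3) * real (card V) ^ 2 \<le> card (edges V E)"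
  shows "card {v \<in> V. degree v < (1/2 - 3/2 * \<beta>) * card V} \<le> \<beta> * card V"
proof (rule card_low_values_le[OF finite_V assms(1,2)])
  show "(\<Sum>v\<in>V. degree v ^ 2) \<le> card V * (\<Sum>v\<in>V. degree v) / 2"
    using assms(3) by (rule sum_degree_squares_le)
  have "(1/2 - 2 * \<beta> ^ 3) * real (card V) ^ 2 = 2 * ((1/4 - \<beta> ^ 3) * real (card V) ^ 2)"
    by (simp add: algebra_simps)
  then show "(1/2 - 2 * \<beta> ^ 3) * real (card V) ^ 2 \<le> (\<Sum>v\<in>V. degree v)"
    using edges_ge sum_degree_eq_two_card_edges by linarith
qed

lemma induced_bipartite_if_high_degree:
  fixes b :: real
  assumes "S \<subseteq> V" "0 < b" "25 * b < card V"
    and codegree_le: "\<And>u v. E u v \<Longrightarrow> codegree u v \<le> card V / 6 - 2 * b"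
    and degree_ge: "\<And>v. v \<in> S \<Longrightarrow> card V / 2 - 3/2 * b \<le> degree v"
    and deg_in_ge: "\<And>v. v \<in> S \<Longrightarrow> card V / 2 - 5/2 * b \<le> deg_in S E v"
  shows "induced_bipartite S E"
proof -
  have "dense_triangle_free S E (card V / 2 - 5/2 * b)"
  proof
    show "finite S"
      using finite_subset[OF assms(1) finite_V] .
    show "\<not> E u w" if "u \<in> S" "v \<in> S" "w \<in> S" "E u v" "E v w" for u v w
      using that codegree_le degree_ge \<open>0 < b\<close>
      by (intro no_triangle_if_high_degree[where c = "card V / 6 - 2 * b"]) auto
    show "card V / 2 - 5/2 * b \<le> deg_in S E v" if "v \<in> S" for v
      using deg_in_ge[OF that] .
    have "card S \<le> card V"
      using assms(1) finite_V by (rule card_mono[rotated])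
    then show "2 * real (card S) < 5 * (card V / 2 - 5/2 * b)"
      using \<open>25 * b < card V\<close> by (simp add: algebra_simps)
  qed
  then show ?thesis
    by (rule dense_triangle_free.induced_bipartite)
qed

lemma large_induced_bipartite:
  fixes \<beta> :: real
  assumes "0 < \<beta>" "\<beta> < 1/25"
    and codegree_le: "\<And>u v. E u v \<Longrightarrow> codegree u v \<le> (1/6 - 2 * \<beta>) * card V"
    and edges_ge: "(1/4 - \<beta> ^ 3) * real (card V) ^ 2 \<le> card (edges V E)"
  shows "\<exists>S \<subseteq> V. induced_bipartite S E \<and> (1 - \<beta>) * card V \<le> card S
    \<and> (\<forall>v\<in>S. (1/2 - 4 * \<beta>) * card V \<le> deg_in S E v)"
proof (cases "V = {}")
  case True
  then show ?thesis by (simp add: induced_bipartite_def)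
next
  case False
  define n where "n = real (card V)"
  define b where "b = \<beta> * n"
  \<comment> \<open>all bounds are rewritten to be linear in the atoms \<open>n\<close> and \<open>b\<close>, for \<open>linarith\<close>\<close>
  have lin: "(x - y * \<beta>) * n = x * n - y * b" for x y
    by (simp add: b_def algebra_simps)
  have "0 < n" using False finite_V by (simp add: n_def card_gt_0_iff)
  then have "0 < b" "25 * b < n"
    using assms(1,2) by (simp_all add: b_def)
  have codegree_le': "codegree u v \<le> n / 6 - 2 * b" if "E u v" for u v
    using codegree_le[OF that] lin[of "1/6" 2] by (simp add: n_def)
  define L where "L = {v \<in> V. degree v < (1/2 - 3/2 * \<beta>) * n}"
  define S where "S = V - L"
  have "finite L" "L \<subseteq> V" using finite_V by (auto simp: L_def)
  have "codegree u v \<le> card V / 6" if "E u v" for u v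
    using codegree_le'[OF that] \<open>0 < b\<close> unfolding n_def by linarith
  then have card_L: "card L \<le> b"
    unfolding L_def n_def b_def using assms(1,2) edges_ge by (intro card_low_degree_le) auto
  have "card S + card L = card V"
    using card_Diff_subset[OF \<open>finite L\<close> \<open>L \<subseteq> V\<close>] card_mono[OF finite_V \<open>L \<subseteq> V\<close>]
    unfolding S_def by linarith
  then have card_S: "n - b \<le> card S"
    using card_L unfolding n_def by linarith
  have degree_S: "n / 2 - 3/2 * b \<le> degree v" if "v \<in> S" for v
    using that lin[of "1/2" "3/2"] by (auto simp: S_def L_def)
  have deg_in_S: "n / 2 - 5/2 * b \<le> deg_in S E v" if "v \<in> S" for v
    using degree_S[OF that] card_L deg_in_le_deg_in_Diff[OF finite_V \<open>finite L\<close>, of E v]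
    by (simp add: S_def degree_def)
  have "induced_bipartite S E"
    using \<open>0 < b\<close> \<open>25 * b < n\<close> codegree_le' degree_S deg_in_S unfolding n_def
    by (intro induced_bipartite_if_high_degree) (auto simp: S_def)
  moreover have "n / 2 - 4 * b \<le> deg_in S E v" if "v \<in> S" for v
    using deg_in_S[OF that] \<open>0 < b\<close> by linarith
  ultimately show ?thesis
    using card_S lin[of 1 1] lin[of "1/2" 4] by (auto simp: S_def n_def)
qed

end

lemma powr_one_third_less:
  fixes \<alpha> :: real
  assumes "0 < \<alpha>" "\<alpha> < 10 powr (-5)"
  shows "\<alpha> powr (1/3) < 1/25"
proof (rule ccontr)
  assume "\<not> \<alpha> powr (1/3) < 1/25"
  then have "(1/25) ^ 3 \<le> (\<alpha> powr (1/3)) ^ 3"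
    by (intro power_mono) auto
  also have "\<dots> = \<alpha>"
    using assms(1) by (simp add: powr_power)
  finally show False
    using assms(2) by (simp add: powr_neg_numeral power_divide)
qed

theorem theorem6:
  fixes V :: "'a set" and E :: "'a \<Rightarrow> 'a \<Rightarrow> bool" and \<alpha> :: real
  assumes "simple_graph V E"
    and "0 < \<alpha>" and "\<alpha> < 10 powr (-5)"
    and "real (card (edges V E)) \<ge> (1/4 - \<alpha>) * (real (card V))^2"
  shows "real (booksize V E) > (1/6 - 2 * \<alpha> powr (1/3)) * real (card V)
     \<or> (\<exists>S \<subseteq> V. induced_bipartite S E
          \<and> real (card S) \<ge> (1 - \<alpha> powr (1/3)) * real (card V)
          \<and> (\<forall>v\<in>S. real (deg_in S E v) \<ge> (1/2 - 4 * \<alpha> powr (1/3)) * real (card V)))"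
proof -
  interpret graph V E by (rule graph.intro) fact
  define \<beta> where "\<beta> = \<alpha> powr (1/3)"
  have "0 < \<beta>" "\<beta> ^ 3 = \<alpha>" "\<beta> < 1/25"
    using assms(2,3) powr_one_third_less by (simp_all add: \<beta>_def powr_power)
  show ?thesis
  proof (cases "(1/6 - 2 * \<beta>) * card V < booksize V E")
    case False
    then have "codegree u v \<le> (1/6 - 2 * \<beta>) * card V" if "E u v" for u v
      using codegree_le_booksize[OF that] by linarith
    then show ?thesis
      using large_induced_bipartite[OF \<open>0 < \<beta>\<close> \<open>\<beta> < 1/25\<close>] assms(4) \<open>\<beta> ^ 3 = \<alpha>\<close>
      by (simp add: \<beta>_def)
  qed (simp add: \<beta>_def)
qed

end
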